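(* Let $\nu\ge 0$, $0\le a<b$ and $d>0$. Then $$\int_{a}^b u^{\nu}e^{-du}\,du \stackrel c \approx b^\nu\left(\frac{a+\frac 1d}{b+\frac 1d}\right)^\nu e^{-ad}\,\frac {b-a} {d(b-a)+1},$$ where the comparability constant $c$ depends only on $\nu$.
   Context: $f\stackrel c\approx g$ means $c^{-1}g\le f\le cg$ for all indicated values of the variables, with $c>0$ depending only on the stated parameters. *)

theory Defs
  imports "HOL-Analysis.Analysis"
begin

end

theory Submission imports Defs begin

text \<open>Write \<open>w = window_point a b d\<close>, which is comparable to \<open>min b (a + 1/d)\<close>, and
\<open>Q = window_length a b d\<close>, which is comparable to \<open>min (b - a) (1/d)\<close>; the right-hand side
is \<open>w powr \<nu> * exp (- a d) * Q\<close>. The mass of the integral sits on \<open>[a, a + Q]\<close>, where \<open>u\<close> is of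
size \<open>w\<close> and \<open>exp (- d u)\<close> of size \<open>exp (- a d)\<close>.
Upper bound: on \<open>[a, b]\<close> one has \<open>u \<le> 2 (1 + d (u - a)) w\<close>, and \<open>exp (- d (u - a))\<close>
absorbs \<open>(1 + d (u - a)) powr (\<nu> + 2)\<close>, leaving the integral of \<open>1 / (1 + d (u - a))\<^sup>2\<close>, which is
exactly \<open>Q\<close>. Lower bound: with \<open>l = min (b - a) (1/d) \<ge> Q\<close>, on \<open>[a + l/2, a + l]\<close> one
has \<open>u \<ge> w/2\<close> and \<open>d u \<le> a d + 1\<close>.\<close>

definition window_point :: "real \<Rightarrow> real \<Rightarrow> real \<Rightarrow> real" where
  "window_point a b d = b * ((a + 1/d) / (b + 1/d))"

definition window_length :: "real \<Rightarrow> real \<Rightarrow> real \<Rightarrow> real" where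
  "window_length a b d = (b - a) / (d * (b - a) + 1)"

lemma one_plus_powr_mult_exp_neg_le:
  fixes p x :: real
  assumes p: "p \<ge> 1" and x: "x \<ge> 0"
  shows "(1 + x) powr p * exp (- x) \<le> p powr p"
proof -
  have "(1 + x) / p \<le> 1 + x / p" using p x by (simp add: field_simps)
  also have "\<dots> \<le> exp (x / p)" by (rule exp_ge_add_one_self)
  finally have "((1 + x) / p) powr p \<le> exp (x / p) powr p"
    using p x by (intro powr_mono2) auto
  also have "exp (x / p) powr p = exp x" using p by (simp add: powr_def)
  finally have "(1 + x) powr p \<le> p powr p * exp x"
    using p x by (simp add: powr_divide field_simps)
  then show ?thesis by (simp add: exp_minus field_simps)
qed

lemma powr_mult_exp_integrable_on:
  fixes \<nu> d x y :: real
  assumes "\<nu> \<ge> 0" "x \<ge> 0"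
  shows "(\<lambda>u. u powr \<nu> * exp (- d * u)) integrable_on {x..y}"
proof (cases "\<nu> = 0")
  case True
  have "(\<lambda>u. exp (- d * u)) integrable_on {x..y}"
    by (intro integrable_continuous_interval continuous_intros)
  then show ?thesis
    using True integrable_spike_finite[of "{0}" "{x..y}" _ "\<lambda>u. exp (- d * u)"] by auto
next
  case False
  have "continuous_on {x..y} (\<lambda>u. u powr \<nu> * exp (- d * u))"
    using assms False by (intro continuous_intros continuous_on_powr') auto
  then show ?thesis by (rule integrable_continuous_interval)
qed

lemma has_integral_inverse_square_affine:
  fixes a b d :: real
  assumes "d > 0" "a \<le> b"
  shows "((\<lambda>u. 1 / (1 + d * (u - a))\<^sup>2) has_integral (b - a) / (d * (b - a) + 1)) {a..b}"
proof -
  define F where "F u = - 1 / (d * (1 + d * (u - a)))" for u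
  have "((\<lambda>u. 1 / (1 + d * (u - a))\<^sup>2) has_integral F b - F a) {a..b}"
  proof (rule fundamental_theorem_of_calculus[OF assms(2)])
    fix u assume "u \<in> {a..b}"
    then have pos: "1 + d * (u - a) > 0" using assms by (simp add: add_pos_nonneg)
    have "(F has_real_derivative (d * d) / (d * (1 + d * (u - a)))\<^sup>2) (at u)"
      unfolding F_def using assms pos by (auto intro!: derivative_eq_intros simp: power2_eq_square)
    also have "(d * d) / (d * (1 + d * (u - a)))\<^sup>2 = 1 / (1 + d * (u - a))\<^sup>2"
      using assms by (simp add: power_mult_distrib power2_eq_square)
    finally show "(F has_vector_derivative 1 / (1 + d * (u - a))\<^sup>2) (at u within {a..b})"
      by (simp add: has_real_derivative_iff_has_vector_derivative has_vector_derivative_at_within)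
  qed
  moreover have "F b - F a = (b - a) / (d * (b - a) + 1)"
  proof -
    have "1 + d * (b - a) > 0" using assms by (simp add: add_pos_nonneg)
    with assms show ?thesis by (simp add: F_def divide_simps)
  qed
  ultimately show ?thesis by simp
qed

lemma window_point_pos:
  assumes "0 \<le> a" "a < b" "0 < d"
  shows "window_point a b d > 0"
  using assms by (simp add: window_point_def add_nonneg_pos add_pos_pos)

lemma window_point_le_right:
  assumes "0 \<le> a" "a < b" "0 < d"
  shows "window_point a b d \<le> b"
proof -
  have "(a + 1/d) / (b + 1/d) \<le> 1" using assms by (simp add: divide_simps add_pos_pos)
  moreover have "b \<ge> 0" using assms by simp
  ultimately have "b * ((a + 1/d) / (b + 1/d)) \<le> b" by (rule mult_left_le)
  then show ?thesis by (simp add: window_point_def)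
qed

lemma window_point_le_shift:
  assumes "0 \<le> a" "a < b" "0 < d"
  shows "window_point a b d \<le> a + 1/d"
proof -
  have "b / (b + 1/d) \<le> 1" using assms by (simp add: divide_simps add_pos_pos)
  moreover have "a + 1/d \<ge> 0" using assms by simp
  ultimately have "(a + 1/d) * (b / (b + 1/d)) \<le> a + 1/d" by (rule mult_left_le)
  then show ?thesis by (simp add: window_point_def mult.commute)
qed

lemma le_window_point_mult:
  fixes a b d u :: real
  assumes "0 \<le> a" "a < b" "0 < d" "a \<le> u" "u \<le> b"
  shows "u \<le> 2 * (1 + d * (u - a)) * window_point a b d"
proof -
  define m where "m = a + 1/d"
  define s where "s = d * (u - a)"
  have s0: "s \<ge> 0" and m0: "m > 0" and b0: "b > 0"
    using assms by (auto simp: s_def m_def add_nonneg_pos)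
  have "0 \<le> a * s" "0 < 1/d" using assms s0 by simp_all
  moreover have "u = m * (1 + s) - a * s - 1/d" using assms by (simp add: m_def s_def field_simps)
  ultimately have "u \<le> m * (1 + s)" by linarith
  then have "u * b \<le> m * (1 + s) * b" using b0 by (simp add: mult_right_mono)
  moreover have "u * m \<le> b * m * (1 + s)"
  proof -
    have "u * m \<le> b * m" using assms m0 by (simp add: mult_right_mono)
    also have "\<dots> \<le> b * m * (1 + s)" using b0 m0 s0 by simp
    finally show ?thesis .
  qed
  ultimately have "u * (b + m) \<le> 2 * (1 + s) * (b * m)" by (simp add: algebra_simps)
  then have "u \<le> 2 * (1 + s) * (b * m / (b + m))" using b0 m0 by (simp add: field_simps)
  also have "b * m / (b + m) \<le> b * m / (b + 1/d)"
    using b0 m0 assms by (intro divide_left_mono) (auto simp: m_def)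
  finally show ?thesis
    using s0 by (simp add: window_point_def m_def s_def mult_left_mono)
qed

lemma window_length_nonneg:
  assumes "a \<le> b" "0 < d"
  shows "window_length a b d \<ge> 0"
  using assms by (simp add: window_length_def add_nonneg_pos)

lemma window_length_le_min:
  assumes "a < b" "0 < d"
  shows "window_length a b d \<le> min (b - a) (1/d)"
proof -
  have "d * (b - a) + 1 > 0" using assms by (simp add: add_nonneg_pos)
  then show ?thesis
    using assms by (auto simp: window_length_def divide_simps)
qed

lemma powr_mult_exp_le_inverse_square:
  fixes \<nu> a b d u :: real
  assumes "\<nu> \<ge> 0" "0 \<le> a" "a < b" "0 < d" "a \<le> u" "u \<le> b"
  shows "u powr \<nu> * exp (- d * u) \<le>
    2 powr \<nu> * (\<nu> + 2) powr (\<nu> + 2) * window_point a b d powr \<nu> * exp (- a * d)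
      / (1 + d * (u - a))\<^sup>2"
proof -
  define s where "s = d * (u - a)"
  define w where "w = window_point a b d"
  have s0: "s \<ge> 0" and w0: "w > 0"
    using assms window_point_pos[of a b d] by (simp_all add: s_def w_def)
  have "u powr \<nu> \<le> (2 * (1 + s) * w) powr \<nu>"
    using assms le_window_point_mult[of a b d u] by (intro powr_mono2) (simp_all add: s_def w_def)
  also have "\<dots> = 2 powr \<nu> * (1 + s) powr \<nu> * w powr \<nu>"
    using s0 w0 powr_mult[of 2 "1 + s" \<nu>] powr_mult[of "2 * (1 + s)" w \<nu>] by simp
  finally have u_le: "u powr \<nu> \<le> 2 powr \<nu> * (1 + s) powr \<nu> * w powr \<nu>" .
  have "(1 + s) powr \<nu> * exp (- s) * (1 + s)\<^sup>2 = (1 + s) powr (\<nu> + 2) * exp (- s)"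
    using s0 by (simp add: powr_add)
  also have "\<dots> \<le> (\<nu> + 2) powr (\<nu> + 2)"
    using assms s0 by (intro one_plus_powr_mult_exp_neg_le) auto
  finally have s_le: "(1 + s) powr \<nu> * exp (- s) \<le> (\<nu> + 2) powr (\<nu> + 2) / (1 + s)\<^sup>2"
    using s0 by (simp add: field_simps)
  have "u powr \<nu> * exp (- d * u) = u powr \<nu> * exp (- s) * exp (- a * d)"
    by (simp add: s_def algebra_simps flip: exp_add)
  also have "\<dots> \<le> 2 powr \<nu> * w powr \<nu> * ((1 + s) powr \<nu> * exp (- s)) * exp (- a * d)"
    using u_le by (simp add: mult_right_mono mult_ac)
  also have "\<dots> \<le> 2 powr \<nu> * w powr \<nu> * ((\<nu> + 2) powr (\<nu> + 2) / (1 + s)\<^sup>2) * exp (- a * d)"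
    using s_le by (intro mult_right_mono mult_left_mono) auto
  finally show ?thesis by (simp add: s_def w_def mult_ac)
qed

lemma integral_powr_mult_exp_upper:
  fixes \<nu> a b d :: real
  assumes "\<nu> \<ge> 0" "0 \<le> a" "a < b" "0 < d"
  shows "integral {a..b} (\<lambda>u. u powr \<nu> * exp (- d * u)) \<le>
    2 powr \<nu> * (\<nu> + 2) powr (\<nu> + 2)
      * (window_point a b d powr \<nu> * exp (- a * d) * window_length a b d)"
proof -
  define C where "C = 2 powr \<nu> * (\<nu> + 2) powr (\<nu> + 2) * window_point a b d powr \<nu> * exp (- a * d)"
  have "((\<lambda>u. C * (1 / (1 + d * (u - a))\<^sup>2)) has_integral C * window_length a b d) {a..b}"
    unfolding window_length_def
    using assms by (intro has_integral_mult_right has_integral_inverse_square_affine) auto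
  moreover have "(\<lambda>u. u powr \<nu> * exp (- d * u)) integrable_on {a..b}"
    using assms by (intro powr_mult_exp_integrable_on)
  ultimately have "integral {a..b} (\<lambda>u. u powr \<nu> * exp (- d * u)) \<le> C * window_length a b d"
    using assms powr_mult_exp_le_inverse_square[of \<nu> a b d]
    by (intro has_integral_le[OF integrable_integral]) (auto simp: C_def)
  then show ?thesis by (simp add: C_def mult_ac)
qed

lemma integral_powr_mult_exp_lower:
  fixes \<nu> a b d :: real
  assumes "\<nu> \<ge> 0" "0 \<le> a" "a < b" "0 < d"
  shows "window_point a b d powr \<nu> * exp (- a * d) * window_length a b d / (2 * 2 powr \<nu> * exp 1)
    \<le> integral {a..b} (\<lambda>u. u powr \<nu> * exp (- d * u))"
proof -
  define f where "f = (\<lambda>u. u powr \<nu> * exp (- d * u))"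
  define w where "w = window_point a b d"
  define l where "l = min (b - a) (1/d)"
  define m where "m = (w/2) powr \<nu> * exp (- a * d - 1)"
  have l0: "l > 0" and lb: "a + l \<le> b" and dl: "d * l \<le> 1"
    using assms by (auto simp: l_def min_def field_simps)
  have "w \<le> a + l"
    using window_point_le_right[OF assms(2-4)] window_point_le_shift[OF assms(2-4)]
    by (simp add: w_def l_def)
  then have w_half: "w/2 \<le> a + l/2" using assms by simp
  have m_le: "m \<le> f u" if u: "u \<in> {a + l/2..a + l}" for u
  proof -
    have "(w/2) powr \<nu> \<le> u powr \<nu>"
      using u w_half assms window_point_pos[OF assms(2-4)] by (intro powr_mono2) (auto simp: w_def)
    moreover have "d * u \<le> d * a + d * l" using u assms by (simp flip: distrib_left)
    then have "exp (- a * d - 1) \<le> exp (- d * u)" using dl by (simp add: algebra_simps)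
    ultimately show ?thesis unfolding m_def f_def by (intro mult_mono) auto
  qed
  have f_integrable: "f integrable_on {x..y}" if "x \<ge> 0" for x y
    unfolding f_def using powr_mult_exp_integrable_on[OF assms(1) that] .
  have "m * (l/2) \<le> integral {a + l/2..a + l} f"
  proof -
    have "a + l/2 \<ge> 0" using assms l0 by simp
    from has_integral_le[OF has_integral_const_real integrable_integral[OF f_integrable[OF this, of "a + l"]] m_le]
    show ?thesis using l0 by (simp add: mult.commute)
  qed
  also have "\<dots> \<le> integral {a..b} f"
    using assms l0 lb by (intro integral_subset_le f_integrable) (auto simp: f_def)
  finally have "m * (l/2) \<le> integral {a..b} f" .
  moreover have "m * (window_length a b d / 2) \<le> m * (l/2)"
    using window_length_le_min[OF assms(3,4)] by (intro mult_left_mono) (auto simp: l_def m_def)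
  moreover have "w powr \<nu> * exp (- a * d) * window_length a b d / (2 * 2 powr \<nu> * exp 1)
      = m * (window_length a b d / 2)"
    using window_point_pos[OF assms(2-4)]
    by (simp add: m_def w_def powr_divide exp_diff field_simps)
  ultimately show ?thesis by (simp add: w_def f_def)
qed

lemma powr_mult_eq_window_point_powr:
  assumes "0 \<le> a" "a < b" "0 < d"
  shows "b powr \<nu> * ((a + 1/d) / (b + 1/d)) powr \<nu> = window_point a b d powr \<nu>"
  using assms powr_mult[of b "(a + 1/d) / (b + 1/d)" \<nu>] by (simp add: window_point_def)

definition comparability_constant :: "real \<Rightarrow> real" where
  "comparability_constant \<nu> = max (2 powr \<nu> * (\<nu> + 2) powr (\<nu> + 2)) (2 * 2 powr \<nu> * exp 1)"

lemma comparability_constant_pos: "comparability_constant \<nu> > 0"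
  by (simp add: comparability_constant_def less_max_iff_disj)

lemma integral_powr_mult_exp_comparable:
  fixes \<nu> a b d :: real
  assumes "\<nu> \<ge> 0" "0 \<le> a" "a < b" "0 < d"
  defines "I \<equiv> integral {a..b} (\<lambda>u. u powr \<nu> * exp (- d * u))"
    and "g \<equiv> window_point a b d powr \<nu> * exp (- a * d) * window_length a b d"
    and "c \<equiv> comparability_constant \<nu>"
  shows "g / c \<le> I \<and> I \<le> c * g"
proof
  have g0: "g \<ge> 0" using assms window_length_nonneg[of a b d] by (simp add: g_def)
  have "g / c \<le> g / (2 * 2 powr \<nu> * exp 1)"
    using g0 comparability_constant_pos[of \<nu>]
    by (intro divide_left_mono) (auto simp: c_def comparability_constant_def)
  also have "\<dots> \<le> I"
    using integral_powr_mult_exp_lower[OF assms(1-4)] by (simp add: g_def I_def)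
  finally show "g / c \<le> I" .
  have "I \<le> 2 powr \<nu> * (\<nu> + 2) powr (\<nu> + 2) * g"
    using integral_powr_mult_exp_upper[OF assms(1-4)] by (simp add: g_def I_def)
  also have "\<dots> \<le> c * g"
    using g0 by (intro mult_right_mono) (auto simp: c_def comparability_constant_def)
  finally show "I \<le> c * g" .
qed

theorem mainTheorem10:
  fixes \<nu> :: real
  assumes "\<nu> \<ge> 0"
  shows "\<exists>c>0. \<forall>a b d :: real. 0 \<le> a \<and> a < b \<and> 0 < d \<longrightarrow>
     (let I = integral {a..b} (\<lambda>u. u powr \<nu> * exp (- d * u));
          g = b powr \<nu> * ((a + 1/d) / (b + 1/d)) powr \<nu> * exp (- a * d)
              * ((b - a) / (d * (b - a) + 1))
      in g / c \<le> I \<and> I \<le> c * g)"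
proof (intro exI[of _ "comparability_constant \<nu>"] conjI allI impI comparability_constant_pos)
  fix a b d :: real
  assume "0 \<le> a \<and> a < b \<and> 0 < d"
  then show "let I = integral {a..b} (\<lambda>u. u powr \<nu> * exp (- d * u));
          g = b powr \<nu> * ((a + 1/d) / (b + 1/d)) powr \<nu> * exp (- a * d)
              * ((b - a) / (d * (b - a) + 1))
      in g / comparability_constant \<nu> \<le> I \<and> I \<le> comparability_constant \<nu> * g"
    using assms integral_powr_mult_exp_comparable[of \<nu> a b d] powr_mult_eq_window_point_powr[of a b d \<nu>]
    by (simp add: Let_def window_length_def)
qed

end
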